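(* Let $g$ be a Riemannian metric, $\widehat\nabla$ its Levi-Civita connection, $\nabla$ a metric-compatible linear connection ($\nabla g=0$), and $S$ defined by $\widehat\nabla=\nabla+S$. Then $(\omega,\nabla)$ is Poisson-compatible if and only if $$(\widehat\nabla_k\omega)^{ij}+\omega^{ir}S^j{}_{rk}-\omega^{jr}S^i{}_{rk}=0\quad\text{for all }i,j,k,$$ or equivalently $$\omega^{jm}S^i{}_{mk}=\tfrac12\Big((\widehat\nabla_k\omega)^{ij}-(\widehat\nabla_r\omega)^{mj}g^{ri}g_{mk}+(\widehat\nabla_r\omega)^{im}g^{rj}g_{mk}\Big).$$
   Context: Coordinates $x^i$, summation convention. $\nabla_jdx^i=-\Gamma^i_{jk}dx^k$ and $\widehat\nabla_jdx^i=-\widehat\Gamma^i_{jk}dx^k$; $S(\xi)=\xi_pS^p{}_{nm}dx^n\otimes dx^m$ so $\widehat\Gamma^a_{bc}=\Gamma^a_{bc}-S^a{}_{bc}$. $\omega$ antisymmetric bivector; $(\omega,\nabla)$ Poisson-compatible means $d(\omega^{ij})-\omega^{kj}\nabla_k(dx^i)-\omega^{ik}\nabla_k(dx^j)=0$ for all $i,j$. *)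

theory Defs
  imports "HOL-Analysis.Analysis"
begin

text \<open>Local-coordinate setting: an open coordinate domain U in R^n (n = CARD('n)),
  coordinates x^i, i :: 'n.  Tensor fields are given by their component functions.\<close>

definition pd :: "'n::finite \<Rightarrow> (real^'n \<Rightarrow> real) \<Rightarrow> real^'n \<Rightarrow> real" where
  "pd k f x = frechet_derivative f (at x) (axis k 1)"

fun Ck :: "nat \<Rightarrow> (real^'n::finite) set \<Rightarrow> (real^'n \<Rightarrow> real) \<Rightarrow> bool" where
  "Ck 0 U f = continuous_on U f"
| "Ck (Suc m) U f = (f differentiable_on U \<and> (\<forall>k. Ck m U (pd k f)))"

definition smooth_fun :: "(real^'n::finite) set \<Rightarrow> (real^'n \<Rightarrow> real) \<Rightarrow> bool" where
  "smooth_fun U f = (\<forall>m. Ck m U f)"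

definition riemannian_metric :: "(real^'n::finite) set \<Rightarrow> ('n \<Rightarrow> 'n \<Rightarrow> real^'n \<Rightarrow> real) \<Rightarrow> bool" where
  "riemannian_metric U g =
     ((\<forall>i j. smooth_fun U (g i j)) \<and>
      (\<forall>x\<in>U. \<forall>i j. g i j x = g j i x) \<and>
      (\<forall>x\<in>U. \<forall>v::real^'n. v \<noteq> 0 \<longrightarrow> (\<Sum>i\<in>UNIV. \<Sum>j\<in>UNIV. v$i * v$j * g i j x) > 0))"

definition ginv :: "('n::finite \<Rightarrow> 'n \<Rightarrow> real^'n \<Rightarrow> real) \<Rightarrow> 'n \<Rightarrow> 'n \<Rightarrow> real^'n \<Rightarrow> real" where
  "ginv g i j x = matrix_inv (\<chi> a b. g a b x) $ i $ j"

text \<open>A linear connection, given by Christoffel symbols \<Gamma> a b c x = \<Gamma>^a_{bc}(x), i.e.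
  \<nabla>_b dx^a = - \<Gamma>^a_{bc} dx^c.\<close>
definition connection :: "(real^'n::finite) set \<Rightarrow> ('n \<Rightarrow> 'n \<Rightarrow> 'n \<Rightarrow> real^'n \<Rightarrow> real) \<Rightarrow> bool" where
  "connection U \<Gamma> = (\<forall>a b c. smooth_fun U (\<Gamma> a b c))"

text \<open>Component along dx^l of \<nabla>_k (dx^i).\<close>
definition nabla_dx :: "('n \<Rightarrow> 'n \<Rightarrow> 'n \<Rightarrow> real^'n \<Rightarrow> real) \<Rightarrow> 'n \<Rightarrow> 'n \<Rightarrow> 'n \<Rightarrow> real^'n \<Rightarrow> real" where
  "nabla_dx \<Gamma> k i l x = - \<Gamma> i k l x"

definition metric_compatible :: "(real^'n::finite) set \<Rightarrow> ('n \<Rightarrow> 'n \<Rightarrow> real^'n \<Rightarrow> real)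
    \<Rightarrow> ('n \<Rightarrow> 'n \<Rightarrow> 'n \<Rightarrow> real^'n \<Rightarrow> real) \<Rightarrow> bool" where
  "metric_compatible U g \<Gamma> =
     (\<forall>x\<in>U. \<forall>k i j. pd k (g i j) x - (\<Sum>m\<in>UNIV. \<Gamma> m k i x * g m j x)
                                   - (\<Sum>m\<in>UNIV. \<Gamma> m k j x * g i m x) = 0)"

definition torsion_free :: "(real^'n::finite) set \<Rightarrow> ('n \<Rightarrow> 'n \<Rightarrow> 'n \<Rightarrow> real^'n \<Rightarrow> real) \<Rightarrow> bool" where
  "torsion_free U \<Gamma> = (\<forall>x\<in>U. \<forall>a b c. \<Gamma> a b c x = \<Gamma> a c b x)"

definition levi_civita :: "(real^'n::finite) set \<Rightarrow> ('n \<Rightarrow> 'n \<Rightarrow> real^'n \<Rightarrow> real)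
    \<Rightarrow> ('n \<Rightarrow> 'n \<Rightarrow> 'n \<Rightarrow> real^'n \<Rightarrow> real) \<Rightarrow> bool" where
  "levi_civita U g \<Gamma> = (connection U \<Gamma> \<and> torsion_free U \<Gamma> \<and> metric_compatible U g \<Gamma>)"

text \<open>S defined by \<nabla>hat = \<nabla> + S, i.e. \<Gamma>hat^a_{bc} = \<Gamma>^a_{bc} - S^a_{bc}.\<close>
definition Sdiff :: "('n \<Rightarrow> 'n \<Rightarrow> 'n \<Rightarrow> real^'n \<Rightarrow> real) \<Rightarrow> ('n \<Rightarrow> 'n \<Rightarrow> 'n \<Rightarrow> real^'n \<Rightarrow> real)
    \<Rightarrow> 'n \<Rightarrow> 'n \<Rightarrow> 'n \<Rightarrow> real^'n \<Rightarrow> real" where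
  "Sdiff \<Gamma> \<Gamma>h a b c x = \<Gamma> a b c x - \<Gamma>h a b c x"

definition bivector :: "(real^'n::finite) set \<Rightarrow> ('n \<Rightarrow> 'n \<Rightarrow> real^'n \<Rightarrow> real) \<Rightarrow> bool" where
  "bivector U \<omega> = ((\<forall>i j. smooth_fun U (\<omega> i j)) \<and> (\<forall>x\<in>U. \<forall>i j. \<omega> i j x = - \<omega> j i x))"

definition cov_biv :: "('n::finite \<Rightarrow> 'n \<Rightarrow> 'n \<Rightarrow> real^'n \<Rightarrow> real) \<Rightarrow> ('n \<Rightarrow> 'n \<Rightarrow> real^'n \<Rightarrow> real)
    \<Rightarrow> 'n \<Rightarrow> 'n \<Rightarrow> 'n \<Rightarrow> real^'n \<Rightarrow> real" where
  "cov_biv \<Gamma> \<omega> k i j x = pd k (\<omega> i j) x + (\<Sum>m\<in>UNIV. \<Gamma> i k m x * \<omega> m j x)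
                                        + (\<Sum>m\<in>UNIV. \<Gamma> j k m x * \<omega> i m x)"

text \<open>(\<omega>,\<nabla>) Poisson-compatible: d(\<omega>^{ij}) - \<omega>^{kj} \<nabla>_k(dx^i) - \<omega>^{ik} \<nabla>_k(dx^j) = 0,
  componentwise along dx^l.\<close>
definition poisson_compatible :: "(real^'n::finite) set \<Rightarrow> ('n \<Rightarrow> 'n \<Rightarrow> real^'n \<Rightarrow> real)
    \<Rightarrow> ('n \<Rightarrow> 'n \<Rightarrow> 'n \<Rightarrow> real^'n \<Rightarrow> real) \<Rightarrow> bool" where
  "poisson_compatible U \<omega> \<Gamma> =
     (\<forall>x\<in>U. \<forall>i j l. pd l (\<omega> i j) x - (\<Sum>k\<in>UNIV. \<omega> k j x * nabla_dx \<Gamma> k i l x)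
                                   - (\<Sum>k\<in>UNIV. \<omega> i k x * nabla_dx \<Gamma> k j l x) = 0)"

end

theory Submission
  imports Defs
begin

(* Both connections are metric, so the difference tensor lowered with g,
   S_kmi = g_kp S^p_mi, is antisymmetric in k and i.  Since the Levi-Civita
   connection is torsion free, Poisson compatibility of (omega, nabla) expands to the
   first equation: (hat nabla_k omega)^ij is the antisymmetric part A^ij_k - A^ji_k of
   A^ij_k = omega^jm S^i_mk.  The antisymmetry of the lowered S lets one recover A
   from its antisymmetric part by raising and lowering indices, just as the
   Christoffel symbols are recovered from the derivatives of the metric; this gives
   the second equation. *)

locale metric_inverse =
  fixes G H :: "'n::finite \<Rightarrow> 'n \<Rightarrow> real"
  assumes G_sym: "G a b = G b a"
    and G_H: "(\<Sum>r\<in>UNIV. G a r * H r b) = of_bool (a = b)"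
    and H_G: "(\<Sum>r\<in>UNIV. H a r * G r b) = of_bool (a = b)"
begin

lemma raise_lower: "(\<Sum>r\<in>UNIV. H i r * (\<Sum>b\<in>UNIV. G r b * f b)) = f i"
proof -
  have "(\<Sum>r\<in>UNIV. H i r * (\<Sum>b\<in>UNIV. G r b * f b)) = (\<Sum>r\<in>UNIV. \<Sum>b\<in>UNIV. H i r * G r b * f b)"
    by (simp add: sum_distrib_left mult.assoc)
  also have "\<dots> = (\<Sum>b\<in>UNIV. \<Sum>r\<in>UNIV. H i r * G r b * f b)"
    by (rule sum.swap)
  also have "\<dots> = f i"
    by (simp add: H_G flip: sum_distrib_right)
  finally show ?thesis .
qed

lemma H_sym: "H a b = H b a"
proof -
  have G_col: "(\<Sum>r\<in>UNIV. G s r * H r a) = (\<Sum>r\<in>UNIV. G r s * H r a)" for s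
    by (simp only: G_sym[of _ s])
  have "H b a = (\<Sum>r\<in>UNIV. \<Sum>s\<in>UNIV. G r s * H s b * H r a)"
    by (simp add: G_H flip: sum_distrib_right)
  also have "\<dots> = (\<Sum>s\<in>UNIV. \<Sum>r\<in>UNIV. G r s * H s b * H r a)"
    by (rule sum.swap)
  also have "\<dots> = (\<Sum>s\<in>UNIV. H s b * (\<Sum>r\<in>UNIV. G s r * H r a))"
    by (simp add: G_col sum_distrib_left mult_ac)
  also have "\<dots> = H a b"
    by (simp add: G_H)
  finally show ?thesis by simp
qed

lemma raised_antisym:
  assumes lowered_antisym: "\<And>a m c. (\<Sum>p\<in>UNIV. G a p * S p m c) = - (\<Sum>p\<in>UNIV. G c p * S p m a)"
  shows "(\<Sum>r\<in>UNIV. S j q r * H r i) = - (\<Sum>r\<in>UNIV. S i q r * H r j)"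
proof -
  define K where "K a r = (\<Sum>p\<in>UNIV. G a p * S p q r)" for a r
  have K_antisym: "K a r = - (\<Sum>p\<in>UNIV. G r p * S p q a)" for a r
    unfolding K_def by (rule lowered_antisym)
  have S_raised: "S j q r = (\<Sum>a\<in>UNIV. H j a * K a r)" for r
    by (simp add: K_def raise_lower)
  have "(\<Sum>r\<in>UNIV. S j q r * H r i) = (\<Sum>r\<in>UNIV. \<Sum>a\<in>UNIV. H j a * (H r i * K a r))"
    by (simp add: S_raised sum_distrib_left mult_ac)
  also have "\<dots> = (\<Sum>a\<in>UNIV. H j a * (\<Sum>r\<in>UNIV. H i r * K a r))"
    by (subst sum.swap) (simp add: H_sym[of _ i] sum_distrib_left)
  also have "\<dots> = - (\<Sum>a\<in>UNIV. S i q a * H a j)"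
    by (simp add: K_antisym raise_lower sum_negf H_sym[of j] mult.commute)
  finally show ?thesis .
qed

lemma contract_lowered:
  assumes lowered_antisym: "\<And>a m c. (\<Sum>p\<in>UNIV. G a p * S p m c) = - (\<Sum>p\<in>UNIV. G c p * S p m a)"
  shows "(\<Sum>r\<in>UNIV. \<Sum>m\<in>UNIV. (\<Sum>q\<in>UNIV. w j q * S m q r) * H r i * G m k)
       = - (\<Sum>q\<in>UNIV. w j q * S i q k)"
proof -
  have lowered: "(\<Sum>m\<in>UNIV. G m k * S m q r) = - (\<Sum>p\<in>UNIV. G r p * S p q k)" for q r
    by (simp only: G_sym[of _ k] lowered_antisym[of k])
  have "(\<Sum>r\<in>UNIV. \<Sum>m\<in>UNIV. (\<Sum>q\<in>UNIV. w j q * S m q r) * H r i * G m k)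
      = (\<Sum>r\<in>UNIV. \<Sum>m\<in>UNIV. \<Sum>q\<in>UNIV. w j q * (H r i * (G m k * S m q r)))"
    by (simp add: sum_distrib_left sum_distrib_right mult_ac)
  also have "\<dots> = (\<Sum>r\<in>UNIV. \<Sum>q\<in>UNIV. \<Sum>m\<in>UNIV. w j q * (H r i * (G m k * S m q r)))"
    by (rule sum.cong[OF refl], rule sum.swap)
  also have "\<dots> = (\<Sum>q\<in>UNIV. w j q * (\<Sum>r\<in>UNIV. H r i * (\<Sum>m\<in>UNIV. G m k * S m q r)))"
    by (subst sum.swap) (simp add: sum_distrib_left)
  also have "\<dots> = - (\<Sum>q\<in>UNIV. w j q * S i q k)"
    by (simp add: lowered H_sym[of _ i] raise_lower sum_negf)
  finally show ?thesis .
qed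

lemma contract_raised:
  assumes lowered_antisym: "\<And>a m c. (\<Sum>p\<in>UNIV. G a p * S p m c) = - (\<Sum>p\<in>UNIV. G c p * S p m a)"
  shows "(\<Sum>r\<in>UNIV. \<Sum>m\<in>UNIV. (\<Sum>q\<in>UNIV. w m q * S j q r) * H r i * G m k)
       = - (\<Sum>r\<in>UNIV. \<Sum>m\<in>UNIV. (\<Sum>q\<in>UNIV. w m q * S i q r) * H r j * G m k)"
proof -
  have factor: "(\<Sum>r\<in>UNIV. \<Sum>m\<in>UNIV. (\<Sum>q\<in>UNIV. w m q * S j q r) * H r i * G m k)
      = (\<Sum>q\<in>UNIV. (\<Sum>m\<in>UNIV. w m q * G m k) * (\<Sum>r\<in>UNIV. S j q r * H r i))" for i j
  proof -
    have "(\<Sum>r\<in>UNIV. \<Sum>m\<in>UNIV. (\<Sum>q\<in>UNIV. w m q * S j q r) * H r i * G m k)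
        = (\<Sum>r\<in>UNIV. \<Sum>m\<in>UNIV. \<Sum>q\<in>UNIV. w m q * G m k * (S j q r * H r i))"
      by (simp add: sum_distrib_left sum_distrib_right mult_ac)
    also have "\<dots> = (\<Sum>r\<in>UNIV. \<Sum>q\<in>UNIV. \<Sum>m\<in>UNIV. w m q * G m k * (S j q r * H r i))"
      by (rule sum.cong[OF refl], rule sum.swap)
    also have "\<dots> = (\<Sum>q\<in>UNIV. \<Sum>r\<in>UNIV. \<Sum>m\<in>UNIV. w m q * G m k * (S j q r * H r i))"
      by (rule sum.swap)
    finally show ?thesis
      by (simp add: sum_distrib_left sum_distrib_right)
  qed
  have "(\<Sum>r\<in>UNIV. S j q r * H r i) = - (\<Sum>r\<in>UNIV. S i q r * H r j)" for q
    by (rule raised_antisym[OF lowered_antisym])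
  then show ?thesis
    unfolding factor by (simp add: sum_negf)
qed

lemma skew_equation_iff_explicit_solution:
  fixes w :: "'n \<Rightarrow> 'n \<Rightarrow> real" and S C :: "'n \<Rightarrow> 'n \<Rightarrow> 'n \<Rightarrow> real"
  assumes lowered_antisym: "\<And>a m c. (\<Sum>p\<in>UNIV. G a p * S p m c) = - (\<Sum>p\<in>UNIV. G c p * S p m a)"
    and C_antisym: "\<And>k i j. C k j i = - C k i j"
  shows "(\<forall>i j k. C k i j + (\<Sum>r\<in>UNIV. w i r * S j r k) - (\<Sum>r\<in>UNIV. w j r * S i r k) = 0)
     \<longleftrightarrow> (\<forall>i j k. (\<Sum>m\<in>UNIV. w j m * S i m k) = 1/2 * (C k i j
           - (\<Sum>r\<in>UNIV. \<Sum>m\<in>UNIV. C r m j * H r i * G m k)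
           + (\<Sum>r\<in>UNIV. \<Sum>m\<in>UNIV. C r i m * H r j * G m k)))"
proof -
  define A where "A i j k = (\<Sum>m\<in>UNIV. w j m * S i m k)" for i j k
  define T where "T i j k = (\<Sum>r\<in>UNIV. \<Sum>m\<in>UNIV. C r m j * H r i * G m k)" for i j k
  have T_swap: "(\<Sum>r\<in>UNIV. \<Sum>m\<in>UNIV. C r i m * H r j * G m k) = - T j i k" for i j k
    unfolding T_def by (simp add: C_antisym[of _ m i for m] sum_negf)
  show ?thesis
  proof
    assume skew: "\<forall>i j k. C k i j + (\<Sum>r\<in>UNIV. w i r * S j r k) - (\<Sum>r\<in>UNIV. w j r * S i r k) = 0"
    have C_eq: "C k i j = A i j k - A j i k" for i j k
      using skew[rule_format, where i = i and j = j and k = k] unfolding A_def by linarith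
    have contracted: "(\<Sum>r\<in>UNIV. \<Sum>m\<in>UNIV. A m j r * H r i * G m k) = - A i j k" for i j k
      unfolding A_def by (rule contract_lowered[OF lowered_antisym])
    have T_eq: "T i j k = - A i j k - (\<Sum>r\<in>UNIV. \<Sum>m\<in>UNIV. A j m r * H r i * G m k)" for i j k
      unfolding T_def C_eq by (simp add: left_diff_distrib sum_subtractf contracted)
    have raised: "(\<Sum>r\<in>UNIV. \<Sum>m\<in>UNIV. A j m r * H r i * G m k)
        = - (\<Sum>r\<in>UNIV. \<Sum>m\<in>UNIV. A i m r * H r j * G m k)" for i j k
      unfolding A_def by (rule contract_raised[OF lowered_antisym])
    have "A i j k = 1/2 * (C k i j - T i j k - T j i k)" for i j k
      using T_eq[of i j k] T_eq[of j i k] raised[of i j k] C_eq[where i = i and j = j and k = k] by argo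
    then show "\<forall>i j k. (\<Sum>m\<in>UNIV. w j m * S i m k) = 1/2 * (C k i j
           - (\<Sum>r\<in>UNIV. \<Sum>m\<in>UNIV. C r m j * H r i * G m k)
           + (\<Sum>r\<in>UNIV. \<Sum>m\<in>UNIV. C r i m * H r j * G m k))"
      unfolding T_swap T_def[symmetric] A_def[symmetric] by simp
  next
    assume solved: "\<forall>i j k. (\<Sum>m\<in>UNIV. w j m * S i m k) = 1/2 * (C k i j
           - (\<Sum>r\<in>UNIV. \<Sum>m\<in>UNIV. C r m j * H r i * G m k)
           + (\<Sum>r\<in>UNIV. \<Sum>m\<in>UNIV. C r i m * H r j * G m k))"
    have A_eq: "A i j k = 1/2 * (C k i j - T i j k - T j i k)" for i j k
      using solved unfolding T_swap T_def[symmetric] A_def[symmetric] by simp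
    have "C k i j = A i j k - A j i k" for i j k
      using A_eq[of i j k] A_eq[of j i k] C_antisym[of k i j] by argo
    then show "\<forall>i j k. C k i j + (\<Sum>r\<in>UNIV. w i r * S j r k) - (\<Sum>r\<in>UNIV. w j r * S i r k) = 0"
      unfolding A_def by simp
  qed
qed

end

lemma metric_inverse_ginv:
  fixes g :: "'n::finite \<Rightarrow> 'n \<Rightarrow> real^'n \<Rightarrow> real"
  assumes "riemannian_metric U g" and "x \<in> U"
  shows "metric_inverse (\<lambda>a b. g a b x) (\<lambda>a b. ginv g a b x)"
proof -
  define G :: "real^'n^'n" where "G = (\<chi> a b. g a b x)"
  have "v = 0" if "G *v v = 0" for v
  proof (rule ccontr)
    assume "v \<noteq> 0"
    then have "(\<Sum>i\<in>UNIV. \<Sum>j\<in>UNIV. v$i * v$j * g i j x) > 0"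
      using assms unfolding riemannian_metric_def by blast
    moreover have "(\<Sum>i\<in>UNIV. \<Sum>j\<in>UNIV. v$i * v$j * g i j x) = v \<bullet> (G *v v)"
      by (simp add: G_def inner_vec_def matrix_vector_mult_def sum_distrib_left mult_ac)
    ultimately show False
      using that by simp
  qed
  then have "invertible G"
    using matrix_left_invertible_ker invertible_left_inverse by blast
  then have "G ** matrix_inv G = mat 1 \<and> matrix_inv G ** G = mat 1"
    unfolding invertible_def matrix_inv_def by (rule someI_ex)
  then show ?thesis
    using assms unfolding riemannian_metric_def
    by unfold_locales
      (simp_all add: ginv_def G_def matrix_matrix_mult_def mat_def vec_eq_iff of_bool_def)
qed

lemma smooth_fun_differentiable_at:
  assumes "smooth_fun U f" and "open U" and "x \<in> U"
  shows "f differentiable at x"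
proof -
  have "Ck (Suc 0) U f"
    using assms(1) unfolding smooth_fun_def by blast
  then show ?thesis
    using assms(2,3) differentiable_on_eq_differentiable_at by auto
qed

lemma pd_eq_uminus_on_open:
  assumes "open U" and "x \<in> U" and "f differentiable at x" and "\<And>y. y \<in> U \<Longrightarrow> h y = - f y"
  shows "pd k h x = - pd k f x"
proof -
  have "((\<lambda>y. - f y) has_derivative (\<lambda>v. - frechet_derivative f (at x) v)) (at x)"
    using assms(3) frechet_derivative_works has_derivative_minus by blast
  then have "(h has_derivative (\<lambda>v. - frechet_derivative f (at x) v)) (at x)"
    by (rule has_derivative_transform_within_open[OF _ assms(1,2)]) (simp add: assms(4))
  then have "frechet_derivative h (at x) = (\<lambda>v. - frechet_derivative f (at x) v)"
    by (rule frechet_derivative_at[symmetric])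
  then show ?thesis
    unfolding pd_def by simp
qed

lemma cov_biv_antisym:
  assumes "open U" and "bivector U \<omega>" and "x \<in> U"
  shows "cov_biv \<Gamma> \<omega> k j i x = - cov_biv \<Gamma> \<omega> k i j x"
proof -
  have antisym: "\<omega> a b y = - \<omega> b a y" if "y \<in> U" for a b y
    using assms(2) that unfolding bivector_def by blast
  have "pd k (\<omega> j i) x = - pd k (\<omega> i j) x"
    using assms(2) unfolding bivector_def
    by (intro pd_eq_uminus_on_open[OF assms(1,3)] smooth_fun_differentiable_at[OF _ assms(1,3)] antisym) auto
  moreover have "(\<Sum>m\<in>UNIV. \<Gamma> j k m x * \<omega> m i x) = - (\<Sum>m\<in>UNIV. \<Gamma> j k m x * \<omega> i m x)"
    by (simp add: antisym[OF assms(3), of _ i] sum_negf)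
  moreover have "(\<Sum>m\<in>UNIV. \<Gamma> i k m x * \<omega> j m x) = - (\<Sum>m\<in>UNIV. \<Gamma> i k m x * \<omega> m j x)"
    by (simp add: antisym[OF assms(3), of j] sum_negf)
  ultimately show ?thesis
    unfolding cov_biv_def by linarith
qed

lemma poisson_term_eq_cov_biv:
  assumes "torsion_free U \<Gamma>h" and "bivector U \<omega>" and "x \<in> U"
  shows "pd l (\<omega> i j) x - (\<Sum>k\<in>UNIV. \<omega> k j x * nabla_dx \<Gamma> k i l x)
           - (\<Sum>k\<in>UNIV. \<omega> i k x * nabla_dx \<Gamma> k j l x)
       = cov_biv \<Gamma>h \<omega> l i j x + (\<Sum>r\<in>UNIV. \<omega> i r x * Sdiff \<Gamma> \<Gamma>h j r l x)
           - (\<Sum>r\<in>UNIV. \<omega> j r x * Sdiff \<Gamma> \<Gamma>h i r l x)"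
proof -
  have torsion: "\<Gamma>h a b c x = \<Gamma>h a c b x" for a b c
    using assms(1,3) unfolding torsion_free_def by blast
  have antisym: "\<omega> a b x = - \<omega> b a x" for a b
    using assms(2,3) unfolding bivector_def by blast
  have "(\<Sum>m\<in>UNIV. \<Gamma>h i l m x * \<omega> m j x) = (\<Sum>r\<in>UNIV. \<omega> r j x * \<Gamma>h i r l x)"
    and "(\<Sum>m\<in>UNIV. \<Gamma>h j l m x * \<omega> i m x) = (\<Sum>r\<in>UNIV. \<omega> i r x * \<Gamma>h j r l x)"
    by (simp_all add: torsion[of _ l] mult.commute)
  moreover have "(\<Sum>r\<in>UNIV. \<omega> i r x * Sdiff \<Gamma> \<Gamma>h j r l x)
      = (\<Sum>r\<in>UNIV. \<omega> i r x * \<Gamma> j r l x) - (\<Sum>r\<in>UNIV. \<omega> i r x * \<Gamma>h j r l x)"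
    and "(\<Sum>r\<in>UNIV. \<omega> j r x * Sdiff \<Gamma> \<Gamma>h i r l x)
      = (\<Sum>r\<in>UNIV. \<omega> r j x * \<Gamma>h i r l x) - (\<Sum>r\<in>UNIV. \<omega> r j x * \<Gamma> i r l x)"
    by (simp_all add: Sdiff_def antisym[of j] algebra_simps sum_subtractf)
  ultimately show ?thesis
    unfolding cov_biv_def nabla_dx_def by (simp add: sum_negf)
qed

lemma poisson_compatible_iff_cov_biv:
  assumes "torsion_free U \<Gamma>h" and "bivector U \<omega>"
  shows "poisson_compatible U \<omega> \<Gamma> \<longleftrightarrow>
           (\<forall>x\<in>U. \<forall>i j k. cov_biv \<Gamma>h \<omega> k i j x
               + (\<Sum>r\<in>UNIV. \<omega> i r x * Sdiff \<Gamma> \<Gamma>h j r k x)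
               - (\<Sum>r\<in>UNIV. \<omega> j r x * Sdiff \<Gamma> \<Gamma>h i r k x) = 0)"
  unfolding poisson_compatible_def
  by (rule ball_cong[OF refl]) (simp only: poisson_term_eq_cov_biv[OF assms])

lemma metric_compatible_Sdiff_lowered_antisym:
  assumes "metric_compatible U g \<Gamma>" and "metric_compatible U g \<Gamma>h" and "x \<in> U"
    and g_sym: "\<And>a b. g a b x = g b a x"
  shows "(\<Sum>p\<in>UNIV. g a p x * Sdiff \<Gamma> \<Gamma>h p m c x) = - (\<Sum>p\<in>UNIV. g c p x * Sdiff \<Gamma> \<Gamma>h p m a x)"
proof -
  have "(\<Sum>p\<in>UNIV. g a p x * Sdiff \<Gamma> \<Gamma>h p m c x)
      = (\<Sum>p\<in>UNIV. \<Gamma> p m c x * g p a x) - (\<Sum>p\<in>UNIV. \<Gamma>h p m c x * g p a x)"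
    by (simp add: Sdiff_def g_sym[of a] algebra_simps sum_subtractf)
  moreover have "(\<Sum>p\<in>UNIV. g c p x * Sdiff \<Gamma> \<Gamma>h p m a x)
      = (\<Sum>p\<in>UNIV. \<Gamma> p m a x * g c p x) - (\<Sum>p\<in>UNIV. \<Gamma>h p m a x * g c p x)"
    by (simp add: Sdiff_def algebra_simps sum_subtractf)
  moreover have "pd m (g c a) x - (\<Sum>p\<in>UNIV. \<Gamma> p m c x * g p a x) - (\<Sum>p\<in>UNIV. \<Gamma> p m a x * g c p x) = 0"
    and "pd m (g c a) x - (\<Sum>p\<in>UNIV. \<Gamma>h p m c x * g p a x) - (\<Sum>p\<in>UNIV. \<Gamma>h p m a x * g c p x) = 0"
    using assms(1-3) unfolding metric_compatible_def by blast+
  ultimately show ?thesis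
    by linarith
qed

lemma contorsion_formula_iff:
  fixes g :: "'n::finite \<Rightarrow> 'n \<Rightarrow> real^'n \<Rightarrow> real"
  assumes "open U" and "riemannian_metric U g" and "bivector U \<omega>"
    and "metric_compatible U g \<Gamma>" and "metric_compatible U g \<Gamma>h" and "x \<in> U"
  shows "(\<forall>i j k. cov_biv \<Gamma>h \<omega> k i j x
               + (\<Sum>r\<in>UNIV. \<omega> i r x * Sdiff \<Gamma> \<Gamma>h j r k x)
               - (\<Sum>r\<in>UNIV. \<omega> j r x * Sdiff \<Gamma> \<Gamma>h i r k x) = 0)
     \<longleftrightarrow> (\<forall>i j k. (\<Sum>m\<in>UNIV. \<omega> j m x * Sdiff \<Gamma> \<Gamma>h i m k x)
               = 1/2 * (cov_biv \<Gamma>h \<omega> k i j x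
                   - (\<Sum>r\<in>UNIV. \<Sum>m\<in>UNIV. cov_biv \<Gamma>h \<omega> r m j x * ginv g r i x * g m k x)
                   + (\<Sum>r\<in>UNIV. \<Sum>m\<in>UNIV. cov_biv \<Gamma>h \<omega> r i m x * ginv g r j x * g m k x)))"
proof -
  interpret metric_inverse "\<lambda>a b. g a b x" "\<lambda>a b. ginv g a b x"
    by (rule metric_inverse_ginv[OF assms(2,6)])
  have g_sym: "g a b x = g b a x" for a b
    using assms(2,6) unfolding riemannian_metric_def by blast
  show ?thesis
    by (rule skew_equation_iff_explicit_solution[where w = "\<lambda>a b. \<omega> a b x"
          and S = "\<lambda>a b c. Sdiff \<Gamma> \<Gamma>h a b c x" and C = "\<lambda>k i j. cov_biv \<Gamma>h \<omega> k i j x",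
          OF metric_compatible_Sdiff_lowered_antisym[OF assms(4,5,6) g_sym]
          cov_biv_antisym[OF assms(1,3,6)]])
qed

theorem proposition5p5:
  fixes U :: "(real^'n::finite) set"
    and g :: "'n \<Rightarrow> 'n \<Rightarrow> real^'n \<Rightarrow> real"
    and \<Gamma> \<Gamma>h :: "'n \<Rightarrow> 'n \<Rightarrow> 'n \<Rightarrow> real^'n \<Rightarrow> real"
    and \<omega> :: "'n \<Rightarrow> 'n \<Rightarrow> real^'n \<Rightarrow> real"
  assumes "open U"
    and "riemannian_metric U g"
    and "levi_civita U g \<Gamma>h"
    and "connection U \<Gamma>"
    and "metric_compatible U g \<Gamma>"
    and "bivector U \<omega>"
  shows "(poisson_compatible U \<omega> \<Gamma> \<longleftrightarrow>
           (\<forall>x\<in>U. \<forall>i j k. cov_biv \<Gamma>h \<omega> k i j x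
               + (\<Sum>r\<in>UNIV. \<omega> i r x * Sdiff \<Gamma> \<Gamma>h j r k x)
               - (\<Sum>r\<in>UNIV. \<omega> j r x * Sdiff \<Gamma> \<Gamma>h i r k x) = 0))
       \<and> (poisson_compatible U \<omega> \<Gamma> \<longleftrightarrow>
           (\<forall>x\<in>U. \<forall>i j k. (\<Sum>m\<in>UNIV. \<omega> j m x * Sdiff \<Gamma> \<Gamma>h i m k x)
               = 1/2 * (cov_biv \<Gamma>h \<omega> k i j x
                   - (\<Sum>r\<in>UNIV. \<Sum>m\<in>UNIV. cov_biv \<Gamma>h \<omega> r m j x * ginv g r i x * g m k x)
                   + (\<Sum>r\<in>UNIV. \<Sum>m\<in>UNIV. cov_biv \<Gamma>h \<omega> r i m x * ginv g r j x * g m k x))))"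
proof -
  have "torsion_free U \<Gamma>h" and "metric_compatible U g \<Gamma>h"
    using assms(3) unfolding levi_civita_def by blast+
  then show ?thesis
    unfolding poisson_compatible_iff_cov_biv[OF \<open>torsion_free U \<Gamma>h\<close> assms(6)]
    by (intro conjI refl ball_cong contorsion_formula_iff[OF assms(1,2,6,5)])
qed

end
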